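(* Let $G$ be a red-blue colouring of $K_n$, let $u \in V(G)$, and let $A_1, \ldots, A_5$ be pairwise disjoint non-empty subsets of $V(G) \setminus \{u\}$ such that $(A_1, \ldots, A_5)$ is a pentagon blow-up in $G$. Suppose that there are $t$ pairwise disjoint bad configurations in $(A_1,\dots,A_5)$ with respect to $u$, but no $t+1$ pairwise disjoint such bad configurations, where $t < \min_{i \in [5]} |A_i|$. Then there exists $i \in [5]$ such that $(A_i \cup \{u\}, A_{i+1}, \ldots, A_{i+4})$ is exactly $t$ edge-flips away from a pentagon blow-up.
   Context: A red-blue colouring of $K_n$ assigns red or blue to each edge of the complete graph on the $n$-vertex set $V(G)$. For pairwise disjoint non-empty sets $B_1,\dots,B_5 \subseteq V(G)$, $(B_1,\dots,B_5)$ is a pentagon blow-up if for every $i \in [5]$ all edges between $B_i$ and $B_{i+1}$ are red and all edges between $B_i$ and $B_{i+2}$ are blue (indices modulo 5); it is exactly $t$ edge-flips away from a pentagon blow-up if exactly $t$ of the edges between distinct sets $B_i, B_j$ have a colour different from the one required by this condition (so changing the colours of these $t$ edges makes it a pentagon blow-up). For $u \notin A_1\cup\dots\cup A_5$, a bad configuration in $(A_1,\dots,A_5)$ with respect to $u$ is either a set of three red neighbours of $u$, one from each of $A_i, A_{i+2}, A_{i+3}$ for some $i \in [5]$, or a set of three blue neighbours of $u$, one from each of $A_i, A_{i+1}, A_{i+2}$ for some $i \in [5]$. *)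

theory Defs
  imports Main
begin

text \<open>A red-blue colouring of the complete graph on the finite vertex set V:
  red x y means the edge xy is red; for distinct x, y the edge is blue iff not red x y.
  Indices of the five parts are taken from {0..<5}, arithmetic modulo 5.\<close>

definition red_blue_colouring :: "'a set \<Rightarrow> ('a \<Rightarrow> 'a \<Rightarrow> bool) \<Rightarrow> bool" where
  "red_blue_colouring V red \<longleftrightarrow> finite V \<and> (\<forall>x\<in>V. \<forall>y\<in>V. red x y = red y x)"

definition parts_ok :: "'a set \<Rightarrow> (nat \<Rightarrow> 'a set) \<Rightarrow> bool" where
  "parts_ok V B \<longleftrightarrow> (\<forall>i<5. B i \<noteq> {} \<and> B i \<subseteq> V) \<and>
     (\<forall>i<5. \<forall>j<5. i \<noteq> j \<longrightarrow> B i \<inter> B j = {})"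

definition pentagon_blowup :: "'a set \<Rightarrow> ('a \<Rightarrow> 'a \<Rightarrow> bool) \<Rightarrow> (nat \<Rightarrow> 'a set) \<Rightarrow> bool" where
  "pentagon_blowup V red B \<longleftrightarrow> parts_ok V B \<and>
     (\<forall>i<5. (\<forall>x\<in>B i. \<forall>y\<in>B ((i+1) mod 5). red x y) \<and>
            (\<forall>x\<in>B i. \<forall>y\<in>B ((i+2) mod 5). \<not> red x y))"

text \<open>The set of edges between distinct parts whose colour differs from the required one.
  Every pair of distinct indices mod 5 is of the form (i, i+1) or (i, i+2).\<close>
definition wrong_edges :: "('a \<Rightarrow> 'a \<Rightarrow> bool) \<Rightarrow> (nat \<Rightarrow> 'a set) \<Rightarrow> 'a set set" where
  "wrong_edges red B = {{x, y} | x y. \<exists>i<5.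
      (x \<in> B i \<and> y \<in> B ((i+1) mod 5) \<and> \<not> red x y) \<or>
      (x \<in> B i \<and> y \<in> B ((i+2) mod 5) \<and> red x y)}"

definition flips_away :: "'a set \<Rightarrow> ('a \<Rightarrow> 'a \<Rightarrow> bool) \<Rightarrow> (nat \<Rightarrow> 'a set) \<Rightarrow> nat \<Rightarrow> bool" where
  "flips_away V red B t \<longleftrightarrow> parts_ok V B \<and> card (wrong_edges red B) = t"

definition bad_configuration ::
  "('a \<Rightarrow> 'a \<Rightarrow> bool) \<Rightarrow> (nat \<Rightarrow> 'a set) \<Rightarrow> 'a \<Rightarrow> 'a set \<Rightarrow> bool" where
  "bad_configuration red A u S \<longleftrightarrow> (\<exists>i<5. \<exists>a b c. S = {a, b, c} \<and>
      ((a \<in> A i \<and> b \<in> A ((i+2) mod 5) \<and> c \<in> A ((i+3) mod 5) \<and>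
          red u a \<and> red u b \<and> red u c) \<or>
       (a \<in> A i \<and> b \<in> A ((i+1) mod 5) \<and> c \<in> A ((i+2) mod 5) \<and>
          \<not> red u a \<and> \<not> red u b \<and> \<not> red u c)))"

definition disjoint_bad_family ::
  "('a \<Rightarrow> 'a \<Rightarrow> bool) \<Rightarrow> (nat \<Rightarrow> 'a set) \<Rightarrow> 'a \<Rightarrow> 'a set set \<Rightarrow> bool" where
  "disjoint_bad_family red A u F \<longleftrightarrow>
     finite F \<and> (\<forall>S\<in>F. bad_configuration red A u S) \<and> pairwise disjnt F"

end

theory Submission
  imports Defs "HOL-Library.Disjoint_Sets"
begin

text \<open>Putting \<open>u\<close> into part \<open>i\<close> makes wrong exactly the edges from \<open>u\<close> to the
  misfits of \<open>i\<close>: its red neighbours in \<open>A (i+2)\<close>, \<open>A (i+3)\<close> and its blue neighbours in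
  \<open>A (i+1)\<close>, \<open>A (i+4)\<close>. Every bad configuration contains a misfit of every \<open>i\<close>, so
  \<open>t\<close> disjoint ones force at least \<open>t\<close> misfits for each \<open>i\<close>. Conversely, a bad configuration
  has one vertex among the misfits of each index except its centre, where it has two. If all parts
  and all misfit sets had more than \<open>t\<close> elements, counting the red and blue neighbours of \<open>u\<close>
  in each part shows that some bad configuration can be removed leaving all of them with at least
  \<open>t\<close> elements; by induction this yields \<open>t + 1\<close> disjoint bad configurations. So some \<open>i\<close>
  has exactly \<open>t\<close> misfits.\<close>

lemma all_less_5_iff: "(\<forall>k<(5::nat). P k) \<longleftrightarrow> P 0 \<and> P 1 \<and> P 2 \<and> P 3 \<and> P 4"
  by (auto simp: numeral_eq_Suc less_Suc_eq)

lemma less_5_cases: "(j::nat) < 5 \<Longrightarrow> j = 0 \<or> j = 1 \<or> j = 2 \<or> j = 3 \<or> j = 4"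
  by auto

lemma nat_zero_or_pos_cases:
  fixes x y :: nat
  assumes "1 \<le> x + y"
  obtains "x = 0" "0 < y" | "0 < x" "y = 0" | "0 < x" "0 < y"
  using assms by linarith

text \<open>Here \<open>r k\<close> and \<open>b k\<close> count the red and blue neighbours of \<open>u\<close> in part \<open>k\<close>, so
  \<open>w i\<close> is the number of misfits of \<open>i\<close>. Call \<open>i\<close> a centre if a red configuration of type
  \<open>i\<close> or a blue one of type \<open>i - 1\<close> is available, forcing \<open>w i \<le> s\<close>. Splitting on the signs
  of all \<open>r k\<close> and \<open>b k\<close> works because two centres \<open>i, j\<close> have \<open>w i + w j > 2 s\<close>, a single
  centre has two parts consisting entirely of its misfits, and without centres some \<open>w i\<close> is \<open>0\<close>;
  only the last case needs the lower bounds on \<open>w\<close>.\<close>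

lemma misfit_counts_contradiction:
  fixes r b :: "nat \<Rightarrow> nat" and s :: nat
  defines "w \<equiv> \<lambda>i. r ((i+2) mod 5) + r ((i+3) mod 5) + b ((i+1) mod 5) + b ((i+4) mod 5)"
  assumes "1 \<le> s" and "\<forall>k<5. s \<le> r k + b k" and "\<forall>i<5. s \<le> w i"
    and "\<forall>j<5. 0 < r j \<and> 0 < r ((j+2) mod 5) \<and> 0 < r ((j+3) mod 5) \<longrightarrow> w j \<le> s"
    and "\<forall>j<5. 0 < b j \<and> 0 < b ((j+1) mod 5) \<and> 0 < b ((j+2) mod 5) \<longrightarrow> w ((j+1) mod 5) \<le> s"
  shows False
proof -
  have parts: "s \<le> r 0 + b 0" "s \<le> r 1 + b 1" "s \<le> r 2 + b 2" "s \<le> r 3 + b 3" "s \<le> r 4 + b 4"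
    and counts: "s \<le> r 2 + r 3 + b 1 + b 4" "s \<le> r 3 + r 4 + b 2 + b 0" "s \<le> r 4 + r 0 + b 3 + b 1"
      "s \<le> r 0 + r 1 + b 4 + b 2" "s \<le> r 1 + r 2 + b 0 + b 3"
    and centres:
      "0 < r 0 \<and> 0 < r 2 \<and> 0 < r 3 \<longrightarrow> r 2 + r 3 + b 1 + b 4 \<le> s"
      "0 < r 1 \<and> 0 < r 3 \<and> 0 < r 4 \<longrightarrow> r 3 + r 4 + b 2 + b 0 \<le> s"
      "0 < r 2 \<and> 0 < r 4 \<and> 0 < r 0 \<longrightarrow> r 4 + r 0 + b 3 + b 1 \<le> s"
      "0 < r 3 \<and> 0 < r 0 \<and> 0 < r 1 \<longrightarrow> r 0 + r 1 + b 4 + b 2 \<le> s"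
      "0 < r 4 \<and> 0 < r 1 \<and> 0 < r 2 \<longrightarrow> r 1 + r 2 + b 0 + b 3 \<le> s"
      "0 < b 4 \<and> 0 < b 0 \<and> 0 < b 1 \<longrightarrow> r 2 + r 3 + b 1 + b 4 \<le> s"
      "0 < b 0 \<and> 0 < b 1 \<and> 0 < b 2 \<longrightarrow> r 3 + r 4 + b 2 + b 0 \<le> s"
      "0 < b 1 \<and> 0 < b 2 \<and> 0 < b 3 \<longrightarrow> r 4 + r 0 + b 3 + b 1 \<le> s"
      "0 < b 2 \<and> 0 < b 3 \<and> 0 < b 4 \<longrightarrow> r 0 + r 1 + b 4 + b 2 \<le> s"
      "0 < b 3 \<and> 0 < b 4 \<and> 0 < b 0 \<longrightarrow> r 1 + r 2 + b 0 + b 3 \<le> s"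
    using assms(3-6) unfolding all_less_5_iff w_def by (simp_all flip: numeral_2_eq_2 One_nat_def)
  from parts \<open>1 \<le> s\<close> have pos:
    "1 \<le> r 0 + b 0" "1 \<le> r 1 + b 1" "1 \<le> r 2 + b 2" "1 \<le> r 3 + b 3" "1 \<le> r 4 + b 4"
    by linarith+
  show False
    by (insert centres, rule nat_zero_or_pos_cases[OF pos(1)];
        rule nat_zero_or_pos_cases[OF pos(2)]; rule nat_zero_or_pos_cases[OF pos(3)];
        rule nat_zero_or_pos_cases[OF pos(4)]; rule nat_zero_or_pos_cases[OF pos(5)];
        simp only: simp_thms less_irrefl_nat;
        ((use parts \<open>1 \<le> s\<close> in linarith) | (use counts \<open>1 \<le> s\<close> in linarith)))
qed

lemma mod_5_add_add: "((i + p) mod 5 + k) mod 5 = (i + (p + k) mod 5) mod 5" for i p k :: nat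
  by (simp add: mod_add_left_eq mod_add_right_eq add.assoc)

lemma card_Int_triple_le:
  "card (X \<inter> {a, b, c}) \<le> of_bool (a \<in> X) + of_bool (b \<in> X) + of_bool (c \<in> X)"
  by (simp add: Int_insert_right card_insert_if)

text \<open>The vertices \<open>x\<close> for which \<open>ux\<close> has the wrong colour once \<open>u\<close> joins part \<open>i\<close>.\<close>

definition misfits :: "('a \<Rightarrow> 'a \<Rightarrow> bool) \<Rightarrow> 'a \<Rightarrow> (nat \<Rightarrow> 'a set) \<Rightarrow> nat \<Rightarrow> 'a set" where
  "misfits red u A i =
     {x \<in> A ((i+2) mod 5) \<union> A ((i+3) mod 5). red u x} \<union>
     {x \<in> A ((i+1) mod 5) \<union> A ((i+4) mod 5). \<not> red u x}"

lemma mem_part_iff: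
  assumes "disjoint_family_on A {..<5}" "p < 5" "x \<in> A p" "k < 5"
  shows "x \<in> A k \<longleftrightarrow> k = p"
  using assms disjoint_family_onD[OF assms(1), of k p] by auto

lemma mem_misfits_iff:
  assumes "disjoint_family_on A {..<5}" "p < 5" "x \<in> A p"
  shows "x \<in> misfits red u A i \<longleftrightarrow>
           (if red u x then p = (i+2) mod 5 \<or> p = (i+3) mod 5 else p = (i+1) mod 5 \<or> p = (i+4) mod 5)"
  using mem_part_iff[OF assms] by (auto simp: misfits_def)

lemma finite_misfits: "\<forall>k<5. finite (A k) \<Longrightarrow> finite (misfits red u A i)"
  by (simp add: misfits_def)

lemma card_misfits:
  assumes disj: "disjoint_family_on A {..<5}" and fin: "\<forall>k<5. finite (A k)" and "i < 5"
  shows "card (misfits red u A i) =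
           card {x \<in> A ((i+2) mod 5). red u x} + card {x \<in> A ((i+3) mod 5). red u x} +
           card {x \<in> A ((i+1) mod 5). \<not> red u x} + card {x \<in> A ((i+4) mod 5). \<not> red u x}"
proof -
  have "(i+2) mod 5 \<noteq> (i+3) mod 5" "(i+1) mod 5 \<noteq> (i+4) mod 5"
    using less_5_cases[OF \<open>i < 5\<close>] by auto
  then have "A ((i+2) mod 5) \<inter> A ((i+3) mod 5) = {}" "A ((i+1) mod 5) \<inter> A ((i+4) mod 5) = {}"
    using disjoint_family_onD[OF disj] by auto
  then have "misfits red u A i =
      (({x \<in> A ((i+2) mod 5). red u x} \<union> {x \<in> A ((i+3) mod 5). red u x}) \<union>
       {x \<in> A ((i+1) mod 5). \<not> red u x}) \<union> {x \<in> A ((i+4) mod 5). \<not> red u x}"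
    and "{x \<in> A ((i+2) mod 5). red u x} \<inter> {x \<in> A ((i+3) mod 5). red u x} = {}"
    and "{x \<in> A ((i+1) mod 5). \<not> red u x} \<inter> {x \<in> A ((i+4) mod 5). \<not> red u x} = {}"
    by (auto simp: misfits_def)
  with fin show ?thesis
    by (simp add: card_Un_disjoint Int_Un_distrib2 disjoint_iff)
qed

lemma bad_configuration_meets_misfits:
  assumes disj: "disjoint_family_on A {..<5}" and "bad_configuration red A u S" and "i < 5"
  shows "S \<inter> misfits red u A i \<noteq> {}"
proof -
  obtain j a b c where "j < 5" "S = {a, b, c}" and
    "a \<in> A j \<and> b \<in> A ((j+2) mod 5) \<and> c \<in> A ((j+3) mod 5) \<and> red u a \<and> red u b \<and> red u c \<or>
     a \<in> A j \<and> b \<in> A ((j+1) mod 5) \<and> c \<in> A ((j+2) mod 5) \<and> \<not> red u a \<and> \<not> red u b \<and> \<not> red u c"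
    using assms(2) unfolding bad_configuration_def by blast
  \<comment> \<open>The parts of a red configuration miss two non-adjacent indices, so they meet every pair
    of adjacent indices \<open>i+2, i+3\<close>; the parts of a blue one miss two adjacent indices, so they
    meet every pair \<open>i+1, i+4\<close> of non-adjacent ones.\<close>
  then have "a \<in> misfits red u A i \<or> b \<in> misfits red u A i \<or> c \<in> misfits red u A i"
  proof (elim disjE conjE)
    assume "a \<in> A j" "b \<in> A ((j+2) mod 5)" "c \<in> A ((j+3) mod 5)" "red u a" "red u b" "red u c"
    moreover have "j = (i+2) mod 5 \<or> j = (i+3) mod 5 \<or>
        (j+2) mod 5 = (i+2) mod 5 \<or> (j+2) mod 5 = (i+3) mod 5 \<or>
        (j+3) mod 5 = (i+2) mod 5 \<or> (j+3) mod 5 = (i+3) mod 5"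
      using less_5_cases[OF \<open>j < 5\<close>] less_5_cases[OF \<open>i < 5\<close>] by fastforce
    ultimately show ?thesis
      using mem_misfits_iff[OF disj \<open>j < 5\<close>, of a]
        mem_misfits_iff[OF disj _ \<open>b \<in> A ((j+2) mod 5)\<close>]
        mem_misfits_iff[OF disj _ \<open>c \<in> A ((j+3) mod 5)\<close>] by simp
  next
    assume "a \<in> A j" "b \<in> A ((j+1) mod 5)" "c \<in> A ((j+2) mod 5)"
      "\<not> red u a" "\<not> red u b" "\<not> red u c"
    moreover have "j = (i+1) mod 5 \<or> j = (i+4) mod 5 \<or>
        (j+1) mod 5 = (i+1) mod 5 \<or> (j+1) mod 5 = (i+4) mod 5 \<or>
        (j+2) mod 5 = (i+1) mod 5 \<or> (j+2) mod 5 = (i+4) mod 5"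
      using less_5_cases[OF \<open>j < 5\<close>] less_5_cases[OF \<open>i < 5\<close>] by fastforce
    ultimately show ?thesis
      using mem_misfits_iff[OF disj \<open>j < 5\<close>, of a]
        mem_misfits_iff[OF disj _ \<open>b \<in> A ((j+1) mod 5)\<close>]
        mem_misfits_iff[OF disj _ \<open>c \<in> A ((j+2) mod 5)\<close>] by simp
  qed
  with \<open>S = {a, b, c}\<close> show ?thesis by blast
qed

lemma card_le_card_misfits:
  assumes "disjoint_family_on A {..<5}" and "finite (misfits red u A i)" and "i < 5"
    and "disjoint_bad_family red A u F"
  shows "card F \<le> card (misfits red u A i)"
proof -
  have "\<forall>S\<in>F. \<exists>x. x \<in> S \<inter> misfits red u A i"
    using assms bad_configuration_meets_misfits by (fastforce simp: disjoint_bad_family_def)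
  then obtain f where f: "\<forall>S\<in>F. f S \<in> S \<inter> misfits red u A i"
    by metis
  have "inj_on f F"
  proof (rule inj_onI)
    fix S T assume "S \<in> F" "T \<in> F" "f S = f T"
    with f have "\<not> disjnt S T" by (metis IntD1 disjnt_iff)
    with \<open>S \<in> F\<close> \<open>T \<in> F\<close> assms(4) show "S = T"
      by (auto simp: disjoint_bad_family_def dest: pairwiseD)
  qed
  with f assms(2) show ?thesis
    by (intro card_inj_on_le[of f F]) auto
qed

lemma card_misfits_Int_red_configuration:
  assumes disj: "disjoint_family_on A {..<5}" and "j < 5" "i < 5"
    and "a \<in> A j" "b \<in> A ((j+2) mod 5)" "c \<in> A ((j+3) mod 5)" "red u a" "red u b" "red u c"
  shows "card (misfits red u A i \<inter> {a, b, c}) \<le> (if i = j then 2 else 1)"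
proof -
  have "a \<in> misfits red u A i \<longleftrightarrow> j = (i+2) mod 5 \<or> j = (i+3) mod 5"
    and "b \<in> misfits red u A i \<longleftrightarrow> (j+2) mod 5 = (i+2) mod 5 \<or> (j+2) mod 5 = (i+3) mod 5"
    and "c \<in> misfits red u A i \<longleftrightarrow> (j+3) mod 5 = (i+2) mod 5 \<or> (j+3) mod 5 = (i+3) mod 5"
    using mem_misfits_iff[OF disj \<open>j < 5\<close> \<open>a \<in> A j\<close>]
      mem_misfits_iff[OF disj _ \<open>b \<in> A ((j+2) mod 5)\<close>]
      mem_misfits_iff[OF disj _ \<open>c \<in> A ((j+3) mod 5)\<close>] assms(7-9) by simp_all
  moreover have "of_bool (j = (i+2) mod 5 \<or> j = (i+3) mod 5) +
      of_bool ((j+2) mod 5 = (i+2) mod 5 \<or> (j+2) mod 5 = (i+3) mod 5) +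
      of_bool ((j+3) mod 5 = (i+2) mod 5 \<or> (j+3) mod 5 = (i+3) mod 5) \<le> (if i = j then 2 else 1::nat)"
    using less_5_cases[OF \<open>j < 5\<close>] less_5_cases[OF \<open>i < 5\<close>] by fastforce
  ultimately show ?thesis
    using card_Int_triple_le[of "misfits red u A i" a b c] by simp
qed

lemma card_misfits_Int_blue_configuration:
  assumes disj: "disjoint_family_on A {..<5}" and "j < 5" "i < 5"
    and "a \<in> A j" "b \<in> A ((j+1) mod 5)" "c \<in> A ((j+2) mod 5)"
    and "\<not> red u a" "\<not> red u b" "\<not> red u c"
  shows "card (misfits red u A i \<inter> {a, b, c}) \<le> (if i = (j+1) mod 5 then 2 else 1)"
proof -
  have "a \<in> misfits red u A i \<longleftrightarrow> j = (i+1) mod 5 \<or> j = (i+4) mod 5"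
    and "b \<in> misfits red u A i \<longleftrightarrow> (j+1) mod 5 = (i+1) mod 5 \<or> (j+1) mod 5 = (i+4) mod 5"
    and "c \<in> misfits red u A i \<longleftrightarrow> (j+2) mod 5 = (i+1) mod 5 \<or> (j+2) mod 5 = (i+4) mod 5"
    using mem_misfits_iff[OF disj \<open>j < 5\<close> \<open>a \<in> A j\<close>]
      mem_misfits_iff[OF disj _ \<open>b \<in> A ((j+1) mod 5)\<close>]
      mem_misfits_iff[OF disj _ \<open>c \<in> A ((j+2) mod 5)\<close>] assms(7-9) by simp_all
  moreover have "of_bool (j = (i+1) mod 5 \<or> j = (i+4) mod 5) +
      of_bool ((j+1) mod 5 = (i+1) mod 5 \<or> (j+1) mod 5 = (i+4) mod 5) +
      of_bool ((j+2) mod 5 = (i+1) mod 5 \<or> (j+2) mod 5 = (i+4) mod 5)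
      \<le> (if i = (j+1) mod 5 then 2 else 1::nat)"
    using less_5_cases[OF \<open>j < 5\<close>] less_5_cases[OF \<open>i < 5\<close>] by fastforce
  ultimately show ?thesis
    using card_Int_triple_le[of "misfits red u A i" a b c] by simp
qed

lemma bad_configuration_mono:
  "bad_configuration red B u S \<Longrightarrow> \<forall>k. B k \<subseteq> A k \<Longrightarrow> bad_configuration red A u S"
  unfolding bad_configuration_def by blast

lemma bad_configuration_distinct_parts:
  assumes "bad_configuration red A u S"
  obtains a b c j p q where "S = {a, b, c}" "a \<in> A j" "b \<in> A p" "c \<in> A q"
    and "j < 5" "p < 5" "q < 5" "j \<noteq> p" "j \<noteq> q" "p \<noteq> q"
proof -
  obtain j a b c p q where "j < 5" "S = {a, b, c}" "a \<in> A j" "b \<in> A p" "c \<in> A q"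
    and pq: "p = (j+2) mod 5 \<and> q = (j+3) mod 5 \<or> p = (j+1) mod 5 \<and> q = (j+2) mod 5"
    using assms unfolding bad_configuration_def by blast
  moreover from pq have "p < 5" "q < 5" "j \<noteq> p" "j \<noteq> q" "p \<noteq> q"
    using less_5_cases[OF \<open>j < 5\<close>] by auto
  ultimately show ?thesis
    using that by blast
qed

lemma bad_configuration_subset_parts:
  "bad_configuration red A u S \<Longrightarrow> S \<subseteq> (\<Union>k<5. A k)"
  by (elim bad_configuration_distinct_parts) blast

lemma card_part_Int_bad_configuration:
  assumes disj: "disjoint_family_on A {..<5}" and "bad_configuration red A u S" and "k < 5"
  shows "card (A k \<inter> S) \<le> 1"
  using assms(2)
proof (rule bad_configuration_distinct_parts)
  fix a b c j p q
  assume "S = {a, b, c}" "a \<in> A j" "b \<in> A p" "c \<in> A q"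
    and "j < 5" "p < 5" "q < 5" "j \<noteq> p" "j \<noteq> q" "p \<noteq> q"
  then have "card (A k \<inter> S) \<le> of_bool (k = j) + of_bool (k = p) + of_bool (k = q)"
    using card_Int_triple_le[of "A k" a b c] mem_part_iff[OF disj _ _ \<open>k < 5\<close>] by simp
  also have "\<dots> \<le> 1"
    using \<open>j \<noteq> p\<close> \<open>j \<noteq> q\<close> \<open>p \<noteq> q\<close> by (cases "k = j"; cases "k = p") auto
  finally show ?thesis .
qed

lemma disjoint_bad_family_insert:
  assumes "disjoint_bad_family red (\<lambda>k. A k - S) u F" and "bad_configuration red A u S"
  shows "disjoint_bad_family red A u (insert S F)" and "card (insert S F) = Suc (card F)"
proof -
  have "T \<inter> S = {}" if "T \<in> F" for T
    using that assms(1) bad_configuration_subset_parts[of red "\<lambda>k. A k - S" u T]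
    by (auto simp: disjoint_bad_family_def)
  moreover have "S \<noteq> {}"
    using assms(2) by (auto simp: bad_configuration_def)
  ultimately have "S \<notin> F" and "\<forall>T\<in>F. disjnt S T"
    by (auto simp: disjnt_def)
  with assms bad_configuration_mono[of red "\<lambda>k. A k - S" u _ A]
  show "disjoint_bad_family red A u (insert S F)" and "card (insert S F) = Suc (card F)"
    by (auto simp: disjoint_bad_family_def pairwise_insert disjnt_sym)
qed

lemma exists_bad_configuration_sparing_misfits:
  assumes fin: "\<forall>k<5. finite (A k)" and disj: "disjoint_family_on A {..<5}"
    and parts: "\<forall>k<5. Suc s \<le> card (A k)"
    and misfits: "\<forall>i<5. Suc s \<le> card (misfits red u A i)"
  obtains S where "bad_configuration red A u S"
    and "\<forall>i<5. card (misfits red u A i \<inter> S) + s \<le> card (misfits red u A i)"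
proof (rule ccontr)
  assume "\<not> thesis"
  with that have spoils: "\<exists>i<5. card (misfits red u A i) < card (misfits red u A i \<inter> S) + s"
    if "bad_configuration red A u S" for S
    using that by (meson not_le)
  define r where "r k = card {x \<in> A k. red u x}" for k
  define b where "b k = card {x \<in> A k. \<not> red u x}" for k
  have centred: "card (misfits red u A c) \<le> Suc s"
    if "bad_configuration red A u S" and "c < 5"
      and hits: "\<forall>i<5. card (misfits red u A i \<inter> S) \<le> (if i = c then 2 else 1)" for S c
  proof -
    obtain i where "i < 5" "card (misfits red u A i) < card (misfits red u A i \<inter> S) + s"
      using spoils \<open>bad_configuration red A u S\<close> by blast
    with hits misfits show ?thesis
      by (cases "i = c") fastforce+
  qed
  have nonempty: "\<exists>x\<in>X. P x" if "0 < card {x \<in> X. P x}" for X and P :: "'a \<Rightarrow> bool"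
  proof (rule ccontr)
    assume "\<not> (\<exists>x\<in>X. P x)"
    then have "{x \<in> X. P x} = {}" by blast
    with that show False by simp
  qed
  have red_centre: "card (misfits red u A j) \<le> Suc s"
    if "j < 5" and pos: "0 < r j" "0 < r ((j+2) mod 5)" "0 < r ((j+3) mod 5)" for j
  proof -
    obtain x y z where "x \<in> A j" "y \<in> A ((j+2) mod 5)" "z \<in> A ((j+3) mod 5)"
      and "red u x" "red u y" "red u z"
      using nonempty[OF pos(1)[unfolded r_def]] nonempty[OF pos(2)[unfolded r_def]]
        nonempty[OF pos(3)[unfolded r_def]] by blast
    moreover from this have "bad_configuration red A u {x, y, z}"
      using \<open>j < 5\<close> unfolding bad_configuration_def by blast
    ultimately show ?thesis
      using centred card_misfits_Int_red_configuration[OF disj \<open>j < 5\<close>] \<open>j < 5\<close> by blast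
  qed
  have blue_centre: "card (misfits red u A ((j+1) mod 5)) \<le> Suc s"
    if "j < 5" and pos: "0 < b j" "0 < b ((j+1) mod 5)" "0 < b ((j+2) mod 5)" for j
  proof -
    obtain x y z where "x \<in> A j" "y \<in> A ((j+1) mod 5)" "z \<in> A ((j+2) mod 5)"
      and "\<not> red u x" "\<not> red u y" "\<not> red u z"
      using nonempty[OF pos(1)[unfolded b_def]] nonempty[OF pos(2)[unfolded b_def]]
        nonempty[OF pos(3)[unfolded b_def]] by blast
    moreover from this have "bad_configuration red A u {x, y, z}"
      using \<open>j < 5\<close> unfolding bad_configuration_def by blast
    ultimately show ?thesis
      using centred card_misfits_Int_blue_configuration[OF disj \<open>j < 5\<close>] \<open>j < 5\<close> by simp
  qed
  have "card (A k) = r k + b k" if "k < 5" for k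
  proof -
    have "card ({x \<in> A k. red u x} \<union> {x \<in> A k. \<not> red u x}) = r k + b k"
      unfolding r_def b_def using fin that by (intro card_Un_disjoint) auto
    moreover have "{x \<in> A k. red u x} \<union> {x \<in> A k. \<not> red u x} = A k"
      by blast
    ultimately show ?thesis by simp
  qed
  then show False
    using misfits parts red_centre blue_centre card_misfits[OF disj fin]
    by (intro misfit_counts_contradiction[of "Suc s" r b]) (simp_all add: r_def b_def)
qed

lemma exists_disjoint_bad_family:
  assumes "\<forall>k<5. finite (A k)" and "disjoint_family_on A {..<5}"
    and "\<forall>k<5. s \<le> card (A k)" and "\<forall>i<5. s \<le> card (misfits red u A i)"
  shows "\<exists>F. disjoint_bad_family red A u F \<and> card F = s"
  using assms
proof (induction s arbitrary: A)
  case 0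
  have "disjoint_bad_family red A u {}"
    by (simp add: disjoint_bad_family_def)
  then show ?case by (metis card.empty)
next
  case (Suc s)
  obtain S where S: "bad_configuration red A u S"
    and spare: "\<forall>i<5. card (misfits red u A i \<inter> S) + s \<le> card (misfits red u A i)"
    using exists_bad_configuration_sparing_misfits[OF Suc.prems] by blast
  define A' where "A' k = A k - S" for k
  have "\<forall>k<5. finite (A' k)" and "disjoint_family_on A' {..<5}"
    using Suc.prems(1,2) by (auto simp: A'_def disjoint_family_on_def)
  moreover have "\<forall>k<5. s \<le> card (A' k)"
  proof (intro allI impI)
    fix k :: nat assume "k < 5"
    then have "card (A' k) = card (A k) - card (A k \<inter> S)"
      using Suc.prems(1) by (simp add: A'_def card_Diff_subset_Int)
    with card_part_Int_bad_configuration[OF Suc.prems(2) S \<open>k < 5\<close>] Suc.prems(3) \<open>k < 5\<close>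
    show "s \<le> card (A' k)" by fastforce
  qed
  moreover have "\<forall>i<5. s \<le> card (misfits red u A' i)"
  proof (intro allI impI)
    fix i :: nat assume "i < 5"
    have "misfits red u A' i = misfits red u A i - S"
      by (auto simp: misfits_def A'_def)
    then have "card (misfits red u A' i) = card (misfits red u A i) - card (misfits red u A i \<inter> S)"
      using finite_misfits[OF Suc.prems(1)] by (simp add: card_Diff_subset_Int)
    with spare \<open>i < 5\<close> show "s \<le> card (misfits red u A' i)" by fastforce
  qed
  ultimately obtain F where "disjoint_bad_family red A' u F" "card F = s"
    using Suc.IH by blast
  with S disjoint_bad_family_insert[of red A S u F] show ?case
    unfolding A'_def by metis
qed

definition insert_part :: "'a \<Rightarrow> (nat \<Rightarrow> 'a set) \<Rightarrow> nat \<Rightarrow> nat \<Rightarrow> 'a set" where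
  "insert_part u A i = (\<lambda>j. if j = 0 then A i \<union> {u} else A ((i + j) mod 5))"

lemma mem_insert_part_iff:
  "i < 5 \<Longrightarrow> q < 5 \<Longrightarrow> z \<in> insert_part u A i q \<longleftrightarrow> q = 0 \<and> z = u \<or> z \<in> A ((i + q) mod 5)"
  by (auto simp: insert_part_def)

lemma parts_ok_insert_part:
  assumes "parts_ok V A" and "u \<in> V" and "\<forall>k<5. u \<notin> A k" and "i < 5"
  shows "parts_ok V (insert_part u A i)"
  unfolding parts_ok_def
proof (intro conjI allI impI)
  fix j :: nat assume "j < 5"
  with assms show "insert_part u A i j \<noteq> {}" and "insert_part u A i j \<subseteq> V"
    by (auto simp: insert_part_def parts_ok_def)
next
  fix j l :: nat assume "j < 5" "l < 5" "j \<noteq> l"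
  then have "(i + j) mod 5 \<noteq> (i + l) mod 5"
    using less_5_cases[OF \<open>i < 5\<close>] less_5_cases[OF \<open>j < 5\<close>] less_5_cases[OF \<open>l < 5\<close>]
    by fastforce
  with assms(1) have "A ((i + j) mod 5) \<inter> A ((i + l) mod 5) = {}"
    unfolding parts_ok_def by simp
  with \<open>j < 5\<close> \<open>l < 5\<close> \<open>j \<noteq> l\<close> assms(3,4) show "insert_part u A i j \<inter> insert_part u A i l = {}"
    by (auto simp: mem_insert_part_iff)
qed

lemma wrong_edges_adjacentI:
  "p < 5 \<Longrightarrow> x \<in> B p \<Longrightarrow> y \<in> B ((p+1) mod 5) \<Longrightarrow> \<not> red x y \<Longrightarrow> {x, y} \<in> wrong_edges red B"
  unfolding wrong_edges_def by blast

lemma wrong_edges_nonadjacentI: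
  "p < 5 \<Longrightarrow> x \<in> B p \<Longrightarrow> y \<in> B ((p+2) mod 5) \<Longrightarrow> red x y \<Longrightarrow> {x, y} \<in> wrong_edges red B"
  unfolding wrong_edges_def by blast

lemma wrong_edges_insert_part_subset:
  assumes blow: "pentagon_blowup V red A" and sym: "\<forall>x\<in>V. \<forall>y\<in>V. red x y = red y x"
    and "u \<in> V" and u_notin: "\<forall>k<5. u \<notin> A k" and "i < 5"
  shows "wrong_edges red (insert_part u A i) \<subseteq> (\<lambda>x. {u, x}) ` misfits red u A i"
proof
  let ?B = "insert_part u A i"
  have mem: "z \<in> ?B q \<longleftrightarrow> q = 0 \<and> z = u \<or> z \<in> A ((i + q) mod 5)" if "q < 5" for q z
    using mem_insert_part_iff[OF \<open>i < 5\<close> that] .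
  fix e assume "e \<in> wrong_edges red ?B"
  then obtain x y p where "e = {x, y}" "p < 5" "x \<in> ?B p"
    and xy: "y \<in> ?B ((p+1) mod 5) \<and> \<not> red x y \<or> y \<in> ?B ((p+2) mod 5) \<and> red x y"
    unfolding wrong_edges_def by blast
  have "x = u \<or> y = u"
  proof (rule ccontr)
    assume "\<not> (x = u \<or> y = u)"
    with xy \<open>x \<in> ?B p\<close> \<open>p < 5\<close> have "x \<in> A ((i + p) mod 5)"
      and "y \<in> A ((i + (p+1) mod 5) mod 5) \<and> \<not> red x y \<or> y \<in> A ((i + (p+2) mod 5) mod 5) \<and> red x y"
      by (simp_all add: mem)
    with blow show False
      unfolding mod_5_add_add[symmetric] pentagon_blowup_def by (meson mod_less_divisor zero_less_numeral)
  qed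
  then show "e \<in> (\<lambda>x. {u, x}) ` misfits red u A i"
  proof
    assume "x = u"
    with \<open>x \<in> ?B p\<close> \<open>p < 5\<close> u_notin have "p = 0"
      by (auto simp: mem)
    with xy \<open>x = u\<close> u_notin have "y \<in> misfits red u A i"
      by (auto simp: mem misfits_def)
    with \<open>e = {x, y}\<close> \<open>x = u\<close> show ?thesis by blast
  next
    assume "y = u"
    with xy \<open>p < 5\<close> u_notin have "(p+1) mod 5 = 0 \<and> \<not> red x u \<or> (p+2) mod 5 = 0 \<and> red x u"
      by (auto simp: mem)
    moreover have "(p+1) mod 5 = 0 \<longleftrightarrow> p = 4" "(p+2) mod 5 = 0 \<longleftrightarrow> p = 3"
      using \<open>p < 5\<close> by presburger+
    ultimately have "p = 4 \<and> \<not> red x u \<or> p = 3 \<and> red x u"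
      by simp
    moreover from this have "x \<in> A ((i + p) mod 5)"
      using \<open>x \<in> ?B p\<close> by (auto simp: mem)
    moreover from this have "red x u = red u x"
      using blow sym \<open>u \<in> V\<close> unfolding pentagon_blowup_def parts_ok_def
      by (meson mod_less_divisor subsetD zero_less_numeral)
    ultimately have "x \<in> misfits red u A i"
      by (auto simp: misfits_def)
    with \<open>e = {x, y}\<close> \<open>y = u\<close> show ?thesis by blast
  qed
qed

lemma misfit_edges_subset_wrong_edges:
  assumes sym: "\<forall>x\<in>V. \<forall>y\<in>V. red x y = red y x"
    and "u \<in> V" and AV: "\<forall>k<5. A k \<subseteq> V" and "i < 5"
  shows "(\<lambda>x. {u, x}) ` misfits red u A i \<subseteq> wrong_edges red (insert_part u A i)"
proof clarify
  fix z assume "z \<in> misfits red u A i"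
  have u0: "u \<in> insert_part u A i 0"
    by (simp add: insert_part_def)
  have in_part: "z \<in> insert_part u A i q" if "q < 5" "z \<in> A ((i + q) mod 5)" for q
    using that by (simp add: mem_insert_part_iff[OF \<open>i < 5\<close>])
  have sym_z: "red z u = red u z" if "z \<in> A k" "k < 5" for k
    using sym AV \<open>u \<in> V\<close> that by blast
  from \<open>z \<in> misfits red u A i\<close> have
    "z \<in> A ((i+2) mod 5) \<and> red u z \<or> z \<in> A ((i+3) mod 5) \<and> red u z \<or>
     z \<in> A ((i+1) mod 5) \<and> \<not> red u z \<or> z \<in> A ((i+4) mod 5) \<and> \<not> red u z"
    by (auto simp: misfits_def)
  then show "{u, z} \<in> wrong_edges red (insert_part u A i)"
  proof (elim disjE conjE)
    assume "z \<in> A ((i+2) mod 5)" "red u z"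
    with u0 show ?thesis
      by (intro wrong_edges_nonadjacentI[of 0]) (simp_all add: in_part)
  next
    assume "z \<in> A ((i+3) mod 5)" "red u z"
    with u0 sym_z[of "(i+3) mod 5"] have "{z, u} \<in> wrong_edges red (insert_part u A i)"
      by (intro wrong_edges_nonadjacentI[of 3]) (simp_all add: in_part)
    then show ?thesis
      by (simp add: insert_commute)
  next
    assume "z \<in> A ((i+1) mod 5)" "\<not> red u z"
    with u0 show ?thesis
      by (intro wrong_edges_adjacentI[of 0]) (simp_all add: in_part)
  next
    assume "z \<in> A ((i+4) mod 5)" "\<not> red u z"
    with u0 sym_z[of "(i+4) mod 5"] have "{z, u} \<in> wrong_edges red (insert_part u A i)"
      by (intro wrong_edges_adjacentI[of 4]) (simp_all add: in_part)
    then show ?thesis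
      by (simp add: insert_commute)
  qed
qed

lemma flips_away_insert_part:
  assumes col: "red_blue_colouring V red" and blow: "pentagon_blowup V red A"
    and "u \<in> V" and "\<forall>k<5. u \<notin> A k" and "i < 5"
  shows "flips_away V red (insert_part u A i) (card (misfits red u A i))"
proof -
  have sym: "\<forall>x\<in>V. \<forall>y\<in>V. red x y = red y x"
    using col by (simp add: red_blue_colouring_def)
  have parts: "parts_ok V A"
    using blow by (simp add: pentagon_blowup_def)
  then have "\<forall>k<5. A k \<subseteq> V"
    by (simp add: parts_ok_def)
  with assms sym have "wrong_edges red (insert_part u A i) = (\<lambda>x. {u, x}) ` misfits red u A i"
    by (intro equalityI wrong_edges_insert_part_subset misfit_edges_subset_wrong_edges)
  moreover have "inj_on (\<lambda>x. {u, x}) (misfits red u A i)"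
    by (auto simp: inj_on_def doubleton_eq_iff)
  ultimately show ?thesis
    using parts_ok_insert_part[OF parts assms(3-5)] by (simp add: flips_away_def card_image)
qed

theorem proposition7p11:
  fixes V :: "'a set" and red :: "'a \<Rightarrow> 'a \<Rightarrow> bool" and u :: 'a
    and A :: "nat \<Rightarrow> 'a set" and t :: nat
  assumes col: "red_blue_colouring V red"
    and uV: "u \<in> V"
    and Asub: "\<forall>i<5. A i \<subseteq> V - {u}"
    and blow: "pentagon_blowup V red A"
    and tfam: "\<exists>F. disjoint_bad_family red A u F \<and> card F = t"
    and nofam: "\<not> (\<exists>F. disjoint_bad_family red A u F \<and> card F = t + 1)"
    and tsmall: "\<forall>i<5. t < card (A i)"
  shows "\<exists>i<5. flips_away V red
            (\<lambda>j. if j = 0 then A i \<union> {u} else A ((i + j) mod 5)) t"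
proof -
  have parts: "parts_ok V A"
    using blow by (simp add: pentagon_blowup_def)
  then have disj: "disjoint_family_on A {..<5}"
    by (simp add: parts_ok_def disjoint_family_on_def)
  have fin: "\<forall>k<5. finite (A k)"
    using parts col finite_subset by (auto simp: parts_ok_def red_blue_colouring_def)
  obtain F where "disjoint_bad_family red A u F" "card F = t"
    using tfam by blast
  then have lower: "t \<le> card (misfits red u A i)" if "i < 5" for i
    using card_le_card_misfits[OF disj finite_misfits[OF fin] that] by blast
  have "\<exists>i<5. card (misfits red u A i) \<le> t"
  proof (rule ccontr)
    assume "\<not> (\<exists>i<5. card (misfits red u A i) \<le> t)"
    then have "\<exists>F. disjoint_bad_family red A u F \<and> card F = t + 1"
      using tsmall by (intro exists_disjoint_bad_family[OF fin disj]) auto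
    with nofam show False ..
  qed
  then obtain i where "i < 5" "card (misfits red u A i) = t"
    using lower by fastforce
  moreover have "\<forall>k<5. u \<notin> A k"
    using Asub by blast
  ultimately have "flips_away V red (insert_part u A i) t"
    using flips_away_insert_part[OF col blow uV] by metis
  with \<open>i < 5\<close> show ?thesis
    unfolding insert_part_def by blast
qed

end
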